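(* Let $N=(V,E,\tau,\{u_{ij}\})$ be a temporal network with uniform static edge length $\tau$ and piecewise constant capacities, $T$ a time horizon, and $\phi$ a cut function of a minimum $(s,0)$-$(d,T)$ cut of $\textsc{TEN}(N,T)$. Let $X_\phi=\{i\in V:\phi(i)\in\{0,T+1\}\}$ and let $C\subseteq V\setminus X_\phi$ satisfy $\phi(i)\notin F(\phi,C,i)$ for all $i\in C$. Then $\mathrm{cost}(\phi_C^+)=\mathrm{cost}(\phi_C^-)=\mathrm{cost}(\phi)$.
   Context: $\textsc{TEN}(N,T)$ is the steady-state network on $V\times[0,T]$ with an edge $(i,t)\to(j,t+\tau)$ of capacity $u_{ij}(t)$ whenever $ij\in E$ and $u_{ij}(t)\ne0$, and an infinite-capacity edge $(i,t)\to(i,t+1)$ for $t\in[0,T-1]$; source $(s,0)$, sink $(d,T)$. A cut function is $\phi:V\to[0,T+1]$ with $\phi(s)=0$, $\phi(d)=T+1$, representing the cut with source side $\{(i,t):t\ge\phi(i)\}$; $\mathrm{cost}(\phi)$ is the total capacity of edges from source side to sink side. $\mathcal T=\{t:\exists ij\in E,\ u_{ij}(t)\ne u_{ij}(t-1)\}\cup\{0,T,T+1\}$. For $C\subseteq V\setminus X_\phi$: $\phi_C^+(i)=\phi(i)+1$ for $i\in C$ and $\phi_C^+(i)=\phi(i)$ otherwise; $\phi_C^-(i)=\phi(i)-1$ for $i\in C$ and $\phi_C^-(i)=\phi(i)$ otherwise. For $i\in C$, the forbidden set $F(\phi,C,i)$ is the union of $\mathcal T\cup\{\theta+\tau:\theta\in\mathcal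 T\}$, $\{\phi(j)-\tau,\phi(j):ij\in E,\ j\in V\setminus C\}$, and $\{\phi(j)+\tau,\phi(j):ji\in E,\ j\in V\setminus C\}$. *)

theory Defs
  imports "HOL-Library.Extended_Nonnegative_Real"
begin

definition temporal_network ::
  "'v set \<Rightarrow> ('v \<times> 'v) set \<Rightarrow> 'v \<Rightarrow> 'v \<Rightarrow> int \<Rightarrow> ('v \<Rightarrow> 'v \<Rightarrow> int \<Rightarrow> real) \<Rightarrow> bool" where
  "temporal_network V E s d \<tau> u \<longleftrightarrow>
     finite V \<and> s \<in> V \<and> d \<in> V \<and> s \<noteq> d \<and> E \<subseteq> V \<times> V \<and> 0 < \<tau> \<and>
     (\<forall>(i,j)\<in>E. \<forall>t. 0 \<le> u i j t) \<and>
     finite {t. \<exists>(i,j)\<in>E. u i j t \<noteq> u i j (t - 1)}"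

definition ten_is_cut :: "'v set \<Rightarrow> 'v \<Rightarrow> 'v \<Rightarrow> int \<Rightarrow> ('v \<times> int) set \<Rightarrow> bool" where
  "ten_is_cut V s d T S \<longleftrightarrow> S \<subseteq> V \<times> {0..T} \<and> (s, 0) \<in> S \<and> (d, T) \<notin> S"

text \<open>Capacity of a cut S of TEN(N,T): transit edges (i,t) -> (j,t+tau) for ij in E,
u i j t \<noteq> 0, with both endpoints in V \<times> [0,T] (capacity u i j t), plus
holdover edges (i,t) -> (i,t+1), t in [0,T-1], of infinite capacity.\<close>

definition ten_cut_cost ::
  "'v set \<Rightarrow> ('v \<times> 'v) set \<Rightarrow> int \<Rightarrow> ('v \<Rightarrow> 'v \<Rightarrow> int \<Rightarrow> real) \<Rightarrow> int \<Rightarrow> ('v \<times> int) set \<Rightarrow> ennreal" where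
  "ten_cut_cost V E \<tau> u T S =
     (\<Sum>(i,j,t)\<in>{(i,j,t). (i,j) \<in> E \<and> 0 \<le> t \<and> t + \<tau> \<le> T \<and> u i j t \<noteq> 0 \<and>
                          (i,t) \<in> S \<and> (j, t + \<tau>) \<notin> S}. ennreal (u i j t))
   + (\<Sum>(i,t)\<in>{(i,t). i \<in> V \<and> 0 \<le> t \<and> t \<le> T - 1 \<and> (i,t) \<in> S \<and> (i, t + 1) \<notin> S}. \<infinity>)"

definition ten_min_cut ::
  "'v set \<Rightarrow> ('v \<times> 'v) set \<Rightarrow> 'v \<Rightarrow> 'v \<Rightarrow> int \<Rightarrow> ('v \<Rightarrow> 'v \<Rightarrow> int \<Rightarrow> real) \<Rightarrow> int \<Rightarrow> ('v \<times> int) set \<Rightarrow> bool" where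
  "ten_min_cut V E s d \<tau> u T S \<longleftrightarrow> ten_is_cut V s d T S \<and>
     (\<forall>S'. ten_is_cut V s d T S' \<longrightarrow> ten_cut_cost V E \<tau> u T S \<le> ten_cut_cost V E \<tau> u T S')"

definition cut_function :: "'v set \<Rightarrow> 'v \<Rightarrow> 'v \<Rightarrow> int \<Rightarrow> ('v \<Rightarrow> int) \<Rightarrow> bool" where
  "cut_function V s d T \<phi> \<longleftrightarrow> (\<forall>i\<in>V. 0 \<le> \<phi> i \<and> \<phi> i \<le> T + 1) \<and> \<phi> s = 0 \<and> \<phi> d = T + 1"

definition cut_of :: "'v set \<Rightarrow> int \<Rightarrow> ('v \<Rightarrow> int) \<Rightarrow> ('v \<times> int) set" where
  "cut_of V T \<phi> = {(i,t). i \<in> V \<and> 0 \<le> t \<and> t \<le> T \<and> \<phi> i \<le> t}"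

definition cost ::
  "'v set \<Rightarrow> ('v \<times> 'v) set \<Rightarrow> int \<Rightarrow> ('v \<Rightarrow> 'v \<Rightarrow> int \<Rightarrow> real) \<Rightarrow> int \<Rightarrow> ('v \<Rightarrow> int) \<Rightarrow> ennreal" where
  "cost V E \<tau> u T \<phi> = ten_cut_cost V E \<tau> u T (cut_of V T \<phi>)"

definition X_set :: "'v set \<Rightarrow> int \<Rightarrow> ('v \<Rightarrow> int) \<Rightarrow> 'v set" where
  "X_set V T \<phi> = {i \<in> V. \<phi> i \<in> {0, T + 1}}"

definition phi_plus :: "('v \<Rightarrow> int) \<Rightarrow> 'v set \<Rightarrow> 'v \<Rightarrow> int" where
  "phi_plus \<phi> C i = (if i \<in> C then \<phi> i + 1 else \<phi> i)"

definition phi_minus :: "('v \<Rightarrow> int) \<Rightarrow> 'v set \<Rightarrow> 'v \<Rightarrow> int" where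
  "phi_minus \<phi> C i = (if i \<in> C then \<phi> i - 1 else \<phi> i)"

definition change_times ::
  "('v \<times> 'v) set \<Rightarrow> ('v \<Rightarrow> 'v \<Rightarrow> int \<Rightarrow> real) \<Rightarrow> int \<Rightarrow> int set" where
  "change_times E u T = {t. \<exists>(i,j)\<in>E. u i j t \<noteq> u i j (t - 1)} \<union> {0, T, T + 1}"

definition forbidden ::
  "'v set \<Rightarrow> ('v \<times> 'v) set \<Rightarrow> int \<Rightarrow> ('v \<Rightarrow> 'v \<Rightarrow> int \<Rightarrow> real) \<Rightarrow> int \<Rightarrow>
   ('v \<Rightarrow> int) \<Rightarrow> 'v set \<Rightarrow> 'v \<Rightarrow> int set" where
  "forbidden V E \<tau> u T \<phi> C i =
     change_times E u T \<union> (\<lambda>\<theta>. \<theta> + \<tau>) ` change_times E u T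
     \<union> {x. \<exists>j. (i,j) \<in> E \<and> j \<in> V - C \<and> (x = \<phi> j - \<tau> \<or> x = \<phi> j)}
     \<union> {x. \<exists>j. (j,i) \<in> E \<and> j \<in> V - C \<and> (x = \<phi> j + \<tau> \<or> x = \<phi> j)}"

end

theory Submission
  imports Defs
begin

(* For a cut function \<psi> no holdover edge leaves the source side, and the transit edge
   (i,t) -> (j,t+\<tau>) leaves it iff \<psi> i \<le> t < \<psi> j - \<tau>; so cost \<psi> is the sum over ij \<in> E of
   the capacities u i j t over the interval \<psi> i \<le> t \<le> \<psi> j - \<tau> - 1.  Moving \<phi> by +1 or -1 on C
   moves each endpoint of such an interval by at most one step.  The forbidden-set condition
   says the capacity is constant across every endpoint that moves, and that an interval with
   exactly one moving endpoint is not on the verge of becoming empty; hence each interval sum,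
   and therefore the cost, is affine along the move: cost \<phi>\<^sup>+ + cost \<phi>\<^sup>- = 2 cost \<phi>.
   Since \<phi> is a minimum cut, neither shifted cost is smaller, so both equal cost \<phi>. *)

lemma sum_atLeastAtMost_int_head:
  fixes a c :: int
  assumes "a \<le> c"
  shows "sum g {a..c} = g a + sum g {a + 1..c}"
proof -
  have "{a..c} = insert a {a + 1..c}" using assms by auto
  then show ?thesis by simp
qed

lemma sum_atLeastAtMost_int_last:
  fixes a c :: int
  assumes "a \<le> c"
  shows "sum g {a..c} = sum g {a..c - 1} + g c"
proof -
  have "{a..c} = insert c {a..c - 1}" using assms by auto
  then show ?thesis by (simp add: add.commute)
qed

lemma sum_shift_lower_bound_midpoint:
  fixes a c :: int and g :: "int \<Rightarrow> 'a::ring_1"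
  assumes "g a = g (a - 1)" and "a \<noteq> c + 1"
  shows "sum g {a + 1..c} + sum g {a - 1..c} = 2 * sum g {a..c}"
proof (cases "a \<le> c")
  case True
  then show ?thesis
    using sum_atLeastAtMost_int_head[of "a - 1" c g] sum_atLeastAtMost_int_head[of a c g] assms
    by (simp add: mult_2 add_ac)
qed (use assms in simp)

lemma sum_shift_upper_bound_midpoint:
  fixes a c :: int and g :: "int \<Rightarrow> 'a::ring_1"
  assumes "g (c + 1) = g c" and "a \<noteq> c + 1"
  shows "sum g {a..c + 1} + sum g {a..c - 1} = 2 * sum g {a..c}"
proof (cases "a \<le> c")
  case True
  then show ?thesis
    using sum_atLeastAtMost_int_last[of a "c + 1" g] sum_atLeastAtMost_int_last[of a c g] assms
    by (simp add: mult_2 add_ac)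
qed (use assms in simp)

lemma sum_shift_bounds_midpoint:
  fixes a c :: int and g :: "int \<Rightarrow> 'a::ring_1"
  assumes "g a = g (a - 1)" and "g (c + 1) = g c"
  shows "sum g {a + 1..c + 1} + sum g {a - 1..c - 1} = 2 * sum g {a..c}"
proof (cases "a \<le> c + 1")
  case True
  have "sum g {a + 1..c + 1} = sum g {a..c} + g (c + 1) - g a"
    using sum_atLeastAtMost_int_head[of a "c + 1" g] sum_atLeastAtMost_int_last[of a "c + 1" g] True
    by (simp add: algebra_simps)
  moreover have "sum g {a - 1..c - 1} = sum g {a..c} + g (a - 1) - g c"
    using sum_atLeastAtMost_int_head[of "a - 1" c g] sum_atLeastAtMost_int_last[of "a - 1" c g] True
    by (simp add: algebra_simps)
  ultimately show ?thesis
    using assms by (simp add: mult_2)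
qed (use assms in simp)

definition crossing_capacity ::
  "('v \<times> 'v) set \<Rightarrow> int \<Rightarrow> ('v \<Rightarrow> 'v \<Rightarrow> int \<Rightarrow> real) \<Rightarrow> ('v \<Rightarrow> int) \<Rightarrow> real" where
  "crossing_capacity E \<tau> u \<psi> = (\<Sum>(i,j)\<in>E. \<Sum>t\<in>{\<psi> i..\<psi> j - \<tau> - 1}. u i j t)"

lemma crossing_capacity_nonneg:
  assumes "\<forall>(i,j)\<in>E. \<forall>t. 0 \<le> u i j t"
  shows "0 \<le> crossing_capacity E \<tau> u \<psi>"
  using assms unfolding crossing_capacity_def by (auto intro!: sum_nonneg)

lemma cut_of_no_holdover_crossing:
  "{(i,t). i \<in> V \<and> 0 \<le> t \<and> t \<le> T - 1 \<and> (i,t) \<in> cut_of V T \<psi> \<and> (i, t + 1) \<notin> cut_of V T \<psi>} = {}"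
  by (auto simp: cut_of_def)

lemma cut_of_transit_crossing:
  assumes "E \<subseteq> V \<times> V" and "\<forall>i\<in>V. 0 \<le> \<psi> i \<and> \<psi> i \<le> T + 1" and "0 \<le> \<tau>"
  shows "{(i,j,t). (i,j) \<in> E \<and> 0 \<le> t \<and> t + \<tau> \<le> T \<and> u i j t \<noteq> 0 \<and>
                   (i,t) \<in> cut_of V T \<psi> \<and> (j, t + \<tau>) \<notin> cut_of V T \<psi>}
       = {(i,j,t). (i,j) \<in> E \<and> t \<in> {\<psi> i..\<psi> j - \<tau> - 1} \<and> u i j t \<noteq> 0}"
  using assms by (fastforce simp: cut_of_def)

lemma cost_eq_crossing_capacity:
  assumes "finite E" and "E \<subseteq> V \<times> V" and "\<forall>(i,j)\<in>E. \<forall>t. 0 \<le> u i j t"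
    and "\<forall>i\<in>V. 0 \<le> \<psi> i \<and> \<psi> i \<le> T + 1" and "0 \<le> \<tau>"
  shows "cost V E \<tau> u T \<psi> = ennreal (crossing_capacity E \<tau> u \<psi>)"
proof -
  let ?I = "\<lambda>p. {\<psi> (fst p)..\<psi> (snd p) - \<tau> - 1}"
  let ?B = "{(i,j,t). (i,j) \<in> E \<and> t \<in> {\<psi> i..\<psi> j - \<tau> - 1}}"
  have B_eq: "?B = (\<lambda>((i,j),t). (i,j,t)) ` Sigma E ?I"
    by force
  have inj: "inj_on (\<lambda>((i,j),t). (i,j,t)) (Sigma E ?I)"
    by (auto simp: inj_on_def)
  have "finite ?B"
    unfolding B_eq using assms(1) by auto
  have "cost V E \<tau> u T \<psi> = (\<Sum>(i,j,t)\<in>{x \<in> ?B. (\<lambda>(i,j,t). u i j t) x \<noteq> 0}. ennreal (u i j t))"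
    unfolding cost_def ten_cut_cost_def cut_of_no_holdover_crossing cut_of_transit_crossing[OF assms(2,4,5)]
    by (auto intro!: sum.cong)
  also have "\<dots> = (\<Sum>(i,j,t)\<in>?B. ennreal (u i j t))"
    by (rule sum.mono_neutral_left[OF \<open>finite ?B\<close>]) auto
  also have "\<dots> = ennreal (\<Sum>(i,j,t)\<in>?B. u i j t)"
    using assms(3) by (subst sum_ennreal[symmetric]) (auto simp: case_prod_beta)
  also have "(\<Sum>(i,j,t)\<in>?B. u i j t) = crossing_capacity E \<tau> u \<psi>"
    unfolding B_eq crossing_capacity_def sum.reindex[OF inj]
    by (simp add: sum.Sigma[OF assms(1)] split_def)
  finally show ?thesis .
qed

lemma cost_eq_crossing_capacity_of_cut_function:
  assumes "temporal_network V E s d \<tau> u" and "cut_function V s d T \<psi>"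
  shows "cost V E \<tau> u T \<psi> = ennreal (crossing_capacity E \<tau> u \<psi>)"
proof (rule cost_eq_crossing_capacity)
  show "finite E" "E \<subseteq> V \<times> V" "\<forall>(i,j)\<in>E. \<forall>t. 0 \<le> u i j t" "0 \<le> \<tau>"
    using assms(1) finite_subset unfolding temporal_network_def by auto
  show "\<forall>i\<in>V. 0 \<le> \<psi> i \<and> \<psi> i \<le> T + 1"
    using assms(2) unfolding cut_function_def by blast
qed

lemma cut_of_is_cut:
  assumes "cut_function V s d T \<psi>" and "s \<in> V" and "0 \<le> T"
  shows "ten_is_cut V s d T (cut_of V T \<psi>)"
  using assms unfolding cut_function_def ten_is_cut_def cut_of_def by auto

lemma crossing_capacity_le_of_min_cut:
  assumes "temporal_network V E s d \<tau> u" and "0 \<le> T"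
    and "cut_function V s d T \<phi>" and "ten_min_cut V E s d \<tau> u T (cut_of V T \<phi>)"
    and "cut_function V s d T \<psi>"
  shows "crossing_capacity E \<tau> u \<phi> \<le> crossing_capacity E \<tau> u \<psi>"
proof -
  have "s \<in> V" and u_nonneg: "\<forall>(i,j)\<in>E. \<forall>t. 0 \<le> u i j t"
    using assms(1) unfolding temporal_network_def by auto
  have "cost V E \<tau> u T \<phi> \<le> cost V E \<tau> u T \<psi>"
    using assms(4) cut_of_is_cut[OF assms(5) \<open>s \<in> V\<close> assms(2)]
    unfolding ten_min_cut_def cost_def by blast
  then show ?thesis
    unfolding cost_eq_crossing_capacity_of_cut_function[OF assms(1,3)]
      cost_eq_crossing_capacity_of_cut_function[OF assms(1,5)]
    using crossing_capacity_nonneg[OF u_nonneg] by simp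
qed

lemma interior_of_non_X_set:
  assumes "cut_function V s d T \<phi>" and "C \<subseteq> V - X_set V T \<phi>" and "i \<in> C"
  shows "1 \<le> \<phi> i \<and> \<phi> i \<le> T"
  using assms unfolding cut_function_def X_set_def by fastforce

lemma cut_function_phi_plus:
  assumes "cut_function V s d T \<phi>" and "C \<subseteq> V - X_set V T \<phi>"
  shows "cut_function V s d T (phi_plus \<phi> C)"
  using assms(1) interior_of_non_X_set[OF assms] unfolding cut_function_def phi_plus_def
  by (smt (verit))

lemma cut_function_phi_minus:
  assumes "cut_function V s d T \<phi>" and "C \<subseteq> V - X_set V T \<phi>"
  shows "cut_function V s d T (phi_minus \<phi> C)"
  using assms(1) interior_of_non_X_set[OF assms] unfolding cut_function_def phi_minus_def
  by (smt (verit))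

lemma capacity_steady_at_unforbidden:
  assumes "x \<notin> forbidden V E \<tau> u T \<phi> C i" and "(i',j') \<in> E"
  shows "u i' j' x = u i' j' (x - 1)" and "u i' j' (x - \<tau>) = u i' j' (x - \<tau> - 1)"
proof -
  show "u i' j' x = u i' j' (x - 1)"
    using assms unfolding forbidden_def change_times_def by blast
  have "x - \<tau> \<notin> change_times E u T"
    using assms(1) unfolding forbidden_def by force
  then show "u i' j' (x - \<tau>) = u i' j' (x - \<tau> - 1)"
    using assms(2) unfolding change_times_def by fastforce
qed

lemma unforbidden_not_tight:
  assumes "x \<notin> forbidden V E \<tau> u T \<phi> C i" and "j \<in> V - C"
  shows "(i,j) \<in> E \<Longrightarrow> x \<noteq> \<phi> j - \<tau>" and "(j,i) \<in> E \<Longrightarrow> x \<noteq> \<phi> j + \<tau>"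
  using assms unfolding forbidden_def by blast+

lemma edge_sum_phi_shift_midpoint:
  assumes unforbidden: "\<forall>k\<in>C. \<phi> k \<notin> forbidden V E \<tau> u T \<phi> C k"
    and "E \<subseteq> V \<times> V" and "(i,j) \<in> E"
  shows "(\<Sum>t\<in>{phi_plus \<phi> C i..phi_plus \<phi> C j - \<tau> - 1}. u i j t)
       + (\<Sum>t\<in>{phi_minus \<phi> C i..phi_minus \<phi> C j - \<tau> - 1}. u i j t)
       = 2 * (\<Sum>t\<in>{\<phi> i..\<phi> j - \<tau> - 1}. u i j t)"
proof -
  have "i \<in> V" "j \<in> V"
    using assms(2,3) by auto
  have lower: "u i j (\<phi> i) = u i j (\<phi> i - 1)" if "i \<in> C"
    using capacity_steady_at_unforbidden(1)[OF unforbidden[rule_format, OF that] assms(3)] .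
  have upper: "u i j (\<phi> j - \<tau> - 1 + 1) = u i j (\<phi> j - \<tau> - 1)" if "j \<in> C"
    using capacity_steady_at_unforbidden(2)[OF unforbidden[rule_format, OF that] assms(3)] by simp
  have apart: "\<phi> i \<noteq> \<phi> j - \<tau> - 1 + 1" if "i \<in> C \<longleftrightarrow> j \<notin> C"
  proof (cases "i \<in> C")
    case True
    then show ?thesis
      using unforbidden_not_tight(1)[OF unforbidden[rule_format, OF True] _ assms(3)] that \<open>j \<in> V\<close>
      by simp
  next
    case False
    then show ?thesis
      using unforbidden_not_tight(2)[OF unforbidden[rule_format] _ assms(3)] that \<open>i \<in> V\<close>
      by fastforce
  qed
  consider "i \<in> C" "j \<in> C" | "i \<in> C" "j \<notin> C" | "i \<notin> C" "j \<in> C" | "i \<notin> C" "j \<notin> C"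
    by blast
  then show ?thesis
  proof cases
    case 1
    then show ?thesis
      using sum_shift_bounds_midpoint[where g = "u i j" and a = "\<phi> i" and c = "\<phi> j - \<tau> - 1",
          OF lower upper]
      by (simp add: phi_plus_def phi_minus_def)
  next
    case 2
    then show ?thesis
      using sum_shift_lower_bound_midpoint[where g = "u i j" and a = "\<phi> i" and c = "\<phi> j - \<tau> - 1",
          OF lower apart]
      by (simp add: phi_plus_def phi_minus_def)
  next
    case 3
    then show ?thesis
      using sum_shift_upper_bound_midpoint[where g = "u i j" and a = "\<phi> i" and c = "\<phi> j - \<tau> - 1",
          OF upper apart]
      by (simp add: phi_plus_def phi_minus_def)
  qed (simp add: phi_plus_def phi_minus_def)
qed

lemma crossing_capacity_phi_shift_midpoint:
  assumes "\<forall>k\<in>C. \<phi> k \<notin> forbidden V E \<tau> u T \<phi> C k" and "E \<subseteq> V \<times> V"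
  shows "crossing_capacity E \<tau> u (phi_plus \<phi> C) + crossing_capacity E \<tau> u (phi_minus \<phi> C)
       = 2 * crossing_capacity E \<tau> u \<phi>"
  unfolding crossing_capacity_def sum_distrib_left sum.distrib[symmetric]
  using edge_sum_phi_shift_midpoint[OF assms] by (auto intro!: sum.cong)

theorem mainTheorem3:
  fixes V :: "'v set" and E :: "('v \<times> 'v) set" and s d :: 'v
    and \<tau> T :: int and u :: "'v \<Rightarrow> 'v \<Rightarrow> int \<Rightarrow> real"
    and \<phi> :: "'v \<Rightarrow> int" and C :: "'v set"
  assumes "temporal_network V E s d \<tau> u"
    and "0 \<le> T"
    and "cut_function V s d T \<phi>"
    and "ten_min_cut V E s d \<tau> u T (cut_of V T \<phi>)"
    and "C \<subseteq> V - X_set V T \<phi>"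
    and "\<forall>i\<in>C. \<phi> i \<notin> forbidden V E \<tau> u T \<phi> C i"
  shows "cost V E \<tau> u T (phi_plus \<phi> C) = cost V E \<tau> u T \<phi>
       \<and> cost V E \<tau> u T (phi_minus \<phi> C) = cost V E \<tau> u T \<phi>"
proof -
  note cost_eq = cost_eq_crossing_capacity_of_cut_function[OF assms(1)]
  note minimal = crossing_capacity_le_of_min_cut[OF assms(1-4)]
  have plus: "cut_function V s d T (phi_plus \<phi> C)"
    and minus: "cut_function V s d T (phi_minus \<phi> C)"
    using cut_function_phi_plus[OF assms(3,5)] cut_function_phi_minus[OF assms(3,5)] .
  have "E \<subseteq> V \<times> V"
    using assms(1) unfolding temporal_network_def by blast
  then have "crossing_capacity E \<tau> u (phi_plus \<phi> C) + crossing_capacity E \<tau> u (phi_minus \<phi> C)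
      = 2 * crossing_capacity E \<tau> u \<phi>"
    using crossing_capacity_phi_shift_midpoint assms(6) by blast
  with minimal[OF plus] minimal[OF minus]
  have "crossing_capacity E \<tau> u (phi_plus \<phi> C) = crossing_capacity E \<tau> u \<phi>"
    and "crossing_capacity E \<tau> u (phi_minus \<phi> C) = crossing_capacity E \<tau> u \<phi>"
    by linarith+
  then show ?thesis
    unfolding cost_eq[OF plus] cost_eq[OF minus] cost_eq[OF assms(3)] by simp
qed

end
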